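(* Let $M(n,h)=\frac{2n+2-2\lceil 2\sqrt{n+h}\,\rceil}{4}$. A polyomino with $n$ tiles and $h$ holes is efficiently structured if and only if $h=M(n,h)$.
   Context: A polyomino is a finite union of closed unit squares (tiles) of the square lattice, any two meeting (if at all) in a whole edge, whose interior is connected. Its holes are the bounded connected components of its complement in the plane; the area of a hole is the number of unit squares needed to fill it. The dual graph has a vertex per tile and an edge between tiles sharing an edge; the polyomino is acyclic if its dual graph is a tree. $p_o(A)$ is the number of unit edges on the boundary of $A$ not bounding a hole. A polyomino with $n$ tiles and $h$ holes has minimal outer perimeter if $p_o(A)=2\lceil 2\sqrt{n+h}\,\rceil$, and is efficiently structured if it is acyclic, each hole has area one, and it has minimal outer perimeter. *)

theory Defs
  imports Complex_Main
begin

text \<open>Cells of the square lattice: the cell (i,j) is the closed unit square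
  [i,i+1] x [j,j+1]. A polyomino is represented by its finite set of tiles.\<close>

type_synonym cell = "int \<times> int"

definition adj :: "cell \<Rightarrow> cell \<Rightarrow> bool" where
  "adj c d \<longleftrightarrow> \<bar>fst c - fst d\<bar> + \<bar>snd c - snd d\<bar> = 1"

definition adjrel :: "cell set \<Rightarrow> (cell \<times> cell) set" where
  "adjrel S = {(c, d). c \<in> S \<and> d \<in> S \<and> adj c d}"

text \<open>A polyomino: nonempty finite set of tiles with connected interior,
  i.e. whose dual graph is connected.\<close>
definition polyomino :: "cell set \<Rightarrow> bool" where
  "polyomino A \<longleftrightarrow> finite A \<and> A \<noteq> {} \<and>
     (\<forall>c\<in>A. \<forall>d\<in>A. (c, d) \<in> (adjrel A)\<^sup>*)"

definition comp :: "cell set \<Rightarrow> cell \<Rightarrow> cell set" where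
  "comp A c = {d. (c, d) \<in> (adjrel (- A))\<^sup>*}"

text \<open>Holes: bounded (= finite) connected components of the complement.
  The area of a hole is its number of cells.\<close>
definition holes :: "cell set \<Rightarrow> cell set set" where
  "holes A = {comp A c | c. c \<notin> A \<and> finite (comp A c)}"

text \<open>Outer perimeter: number of unit boundary edges (between a tile and a
  non-tile cell) whose non-tile side lies in the unbounded component.\<close>
definition outer_perimeter :: "cell set \<Rightarrow> nat" where
  "outer_perimeter A =
     card {(c, d). c \<in> A \<and> d \<notin> A \<and> adj c d \<and> infinite (comp A d)}"

definition acyclic_poly :: "cell set \<Rightarrow> bool" where
  "acyclic_poly A \<longleftrightarrow> \<not> (\<exists>vs. length vs \<ge> 3 \<and> distinct vs \<and> set vs \<subseteq> A \<and>
      (\<forall>i < length vs - 1. adj (vs ! i) (vs ! (i + 1))) \<and> adj (last vs) (hd vs))"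

definition min_outer_perimeter :: "cell set \<Rightarrow> bool" where
  "min_outer_perimeter A \<longleftrightarrow>
     int (outer_perimeter A) = 2 * \<lceil>2 * sqrt (real (card A + card (holes A)))\<rceil>"

definition efficiently_structured :: "cell set \<Rightarrow> bool" where
  "efficiently_structured A \<longleftrightarrow> acyclic_poly A \<and> (\<forall>H \<in> holes A. card H = 1) \<and>
     min_outer_perimeter A"

definition M :: "nat \<Rightarrow> nat \<Rightarrow> real" where
  "M n h = (2 * real n + 2 - 2 * real_of_int \<lceil>2 * sqrt (real (n + h))\<rceil>) / 4"

end

theory Submission
  imports Defs
begin

(* Count the 4n pairs (tile, edge-neighbouring cell) of A. Pairs of two tiles number
  2e, where e >= n - 1 is the number of edges of the connected dual graph, with equality
  iff it is a tree. The remaining pairs are boundary edges: the outer perimeter plus the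
  perimeters of the holes. A hole has perimeter at least 4, with equality iff its area
  is one. Filling in the holes leaves only the outer boundary, so the isoperimetric
  inequality for a set of at least n + h cells bounds the outer perimeter below by
  2 ceil(2 sqrt(n + h)). So 4n >= 2(n - 1) + 2 ceil(2 sqrt(n + h)) + 4h, i.e. h <= M(n,h),
  with equality iff all three bounds are tight. *)

lemma adj_sym: "adj c d \<longleftrightarrow> adj d c"
  unfolding adj_def by (simp add: abs_minus_commute add.commute)

lemma adj_irrefl [simp]: "\<not> adj c c"
  unfolding adj_def by simp

lemma sym_adjrel: "sym (adjrel S)"
  unfolding adjrel_def sym_def using adj_sym by auto

lemma finite_adjrel: "finite S \<Longrightarrow> finite (adjrel S)"
  unfolding adjrel_def by (rule finite_subset[of _ "S \<times> S"]) auto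

definition neighbours :: "cell \<Rightarrow> cell set" where
  "neighbours c = {(fst c + 1, snd c), (fst c - 1, snd c), (fst c, snd c + 1), (fst c, snd c - 1)}"

lemma adj_iff_neighbours: "adj c d \<longleftrightarrow> d \<in> neighbours c"
  by (cases c; cases d) (auto simp: adj_def neighbours_def abs_if split: if_splits)

lemma card_neighbours: "card (neighbours c) = 4"
  unfolding neighbours_def by auto

lemma finite_neighbours [simp]: "finite (neighbours c)"
  unfolding neighbours_def by simp

definition boundary :: "cell set \<Rightarrow> (cell \<times> cell) set" where
  "boundary S = {(c, d). c \<in> S \<and> d \<notin> S \<and> adj c d}"

lemma boundary_subset_Sigma: "boundary S \<subseteq> Sigma S neighbours"
  unfolding boundary_def by (auto simp: adj_iff_neighbours)

lemma finite_boundary: "finite S \<Longrightarrow> finite (boundary S)"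
  using boundary_subset_Sigma by (rule finite_subset) auto

lemma card_adjrel_add_card_boundary:
  assumes "finite A"
  shows "card (adjrel A) + card (boundary A) = 4 * card A"
proof -
  have "adjrel A \<union> boundary A = Sigma A neighbours"
    unfolding adjrel_def boundary_def by (auto simp: adj_iff_neighbours)
  moreover have "adjrel A \<inter> boundary A = {}"
    unfolding adjrel_def boundary_def by auto
  moreover have "card (Sigma A neighbours) = 4 * card A"
    using assms by (simp add: card_SigmaI card_neighbours)
  ultimately show ?thesis
    using assms finite_adjrel finite_boundary by (metis card_Un_disjoint)
qed

lemma card_boundary_singleton: "card (boundary {c}) = 4"
proof -
  have "boundary {c} = {c} \<times> neighbours c"
    unfolding boundary_def by (auto simp: adj_iff_neighbours[symmetric])
  then show ?thesis by (simp add: card_cartesian_product card_neighbours)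
qed

text \<open>Every vertex other than the root r has a parent strictly closer to r; the
  pairs (x, parent x) and (parent x, x) are 2 (card A - 1) distinct pairs of R.\<close>
lemma card_connected_sym_rel_ge:
  assumes "finite A" "R \<subseteq> A \<times> A" "sym R" "r \<in> A" "\<forall>x\<in>A. (r, x) \<in> R\<^sup>*"
  shows "2 * (card A - 1) \<le> card R"
proof -
  define depth where "depth x = (LEAST k. (r, x) \<in> R ^^ k)" for x
  have "\<exists>p. (p, x) \<in> R \<and> depth p < depth x" if x: "x \<in> A - {r}" for x
  proof -
    from assms(5) x obtain k where "(r, x) \<in> R ^^ k" by (auto simp: rtrancl_power)
    then have rx: "(r, x) \<in> R ^^ depth x" unfolding depth_def by (rule LeastI)
    with x obtain j where j: "depth x = Suc j" by (cases "depth x") auto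
    with rx obtain p where "(r, p) \<in> R ^^ j" "(p, x) \<in> R" by auto
    moreover from this(1) have "depth p \<le> j" unfolding depth_def by (rule Least_le)
    ultimately show ?thesis using j by auto
  qed
  then obtain parent where parent: "\<And>x. x \<in> A - {r} \<Longrightarrow> (parent x, x) \<in> R \<and> depth (parent x) < depth x"
    by metis
  define up where "up = (\<lambda>x. (x, parent x)) ` (A - {r})"
  define down where "down = (\<lambda>x. (parent x, x)) ` (A - {r})"
  have "card up = card A - 1" "card down = card A - 1"
    unfolding up_def down_def using assms(1,4) by (subst card_image; auto simp: inj_on_def)+
  moreover have "up \<subseteq> R" "down \<subseteq> R"
    unfolding up_def down_def using parent assms(3) by (auto dest: symD)
  moreover have "up \<inter> down = {}"
  proof -
    have False if "x \<in> A - {r}" "y \<in> A - {r}" "(x, parent x) = (parent y, y)" for x y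
      using that parent[of x] parent[of y] by auto
    then show ?thesis unfolding up_def down_def by blast
  qed
  moreover have "finite R" using assms(1,2) finite_subset by blast
  ultimately show ?thesis
    by (metis card_Un_disjoint card_mono le_sup_iff mult_2 rev_finite_subset)
qed

definition adj_path :: "cell set \<Rightarrow> cell list \<Rightarrow> bool" where
  "adj_path A xs \<longleftrightarrow> xs \<noteq> [] \<and> distinct xs \<and> set xs \<subseteq> A \<and>
      (\<forall>i < length xs - 1. adj (xs ! i) (xs ! (i + 1)))"

lemma acyclic_poly_iff_no_closed_path:
  "acyclic_poly A \<longleftrightarrow> \<not> (\<exists>xs. 3 \<le> length xs \<and> adj_path A xs \<and> adj (last xs) (hd xs))"
  unfolding acyclic_poly_def adj_path_def by auto

lemma acyclic_poly_subset: "acyclic_poly A \<Longrightarrow> B \<subseteq> A \<Longrightarrow> acyclic_poly B"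
  unfolding acyclic_poly_def by blast

lemma adj_path_snoc:
  assumes "adj_path A xs" "w \<in> A" "w \<notin> set xs" "adj (last xs) w"
  shows "adj_path A (xs @ [w])"
  unfolding adj_path_def
proof (intro conjI allI impI)
  fix i assume "i < length (xs @ [w]) - 1"
  then have "i < length xs" by simp
  then consider "i + 1 < length xs" | "i = length xs - 1" by linarith
  then show "adj ((xs @ [w]) ! i) ((xs @ [w]) ! (i + 1))"
  proof cases
    case 1
    then show ?thesis using assms(1) by (simp add: adj_path_def nth_append)
  next
    case 2
    then have "(xs @ [w]) ! i = last xs" "(xs @ [w]) ! (i + 1) = w"
      using assms(1) by (auto simp: adj_path_def nth_append last_conv_nth)
    then show ?thesis using assms(4) by simp
  qed
qed (use assms in \<open>auto simp: adj_path_def\<close>)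

lemma adj_path_drop: "adj_path A xs \<Longrightarrow> i < length xs \<Longrightarrow> adj_path A (drop i xs)"
  unfolding adj_path_def by (auto simp: add.assoc dest: in_set_dropD)

lemma adj_path_rtrancl:
  assumes "adj_path A xs" "j < length xs"
  shows "(hd xs, xs ! j) \<in> {(xs ! i, xs ! Suc i) | i. i < length xs - 1}\<^sup>*"
  using assms(2)
proof (induction j)
  case 0
  then show ?case using assms(1) by (simp add: adj_path_def hd_conv_nth)
next
  case (Suc j)
  then have "(xs ! j, xs ! Suc j) \<in> {(xs ! i, xs ! Suc i) | i. i < length xs - 1}" by auto
  with Suc show ?case by (meson Suc_lessD rtrancl_into_rtrancl)
qed

lemma exists_longest_adj_path:
  assumes "finite A" "a \<in> A"
  obtains xs where "adj_path A xs" "\<And>ys. adj_path A ys \<Longrightarrow> length ys \<le> length xs"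
proof -
  have "adj_path A [a]" using assms(2) by (simp add: adj_path_def)
  moreover have "length ys \<le> card A" if "adj_path A ys" for ys
    using that assms(1) unfolding adj_path_def by (metis card_mono distinct_card)
  ultimately obtain m where "\<exists>xs. adj_path A xs \<and> length xs = m"
    and "\<And>ys. adj_path A ys \<Longrightarrow> length ys \<le> m"
    using Nat.ex_has_greatest_nat[of "\<lambda>m. \<exists>xs. adj_path A xs \<and> length xs = m" 1 "card A"]
    by force
  then show ?thesis using that by blast
qed

text \<open>The last cell of a longest path has no neighbour off the path, and its only
  neighbour on the path is its predecessor, as any other one would close a cycle.\<close>
lemma acyclic_poly_has_leaf:
  assumes "finite A" "A \<noteq> {}" "acyclic_poly A"
  obtains v where "v \<in> A" "card {w\<in>A. adj v w} \<le> 1"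
proof -
  obtain xs where xs: "adj_path A xs" and longest: "\<And>ys. adj_path A ys \<Longrightarrow> length ys \<le> length xs"
    using exists_longest_adj_path assms(1,2) by blast
  define m where "m = length xs"
  define v where "v = last xs"
  have m: "m \<ge> 1" "v = xs ! (m - 1)" "v \<in> A"
    using xs unfolding m_def v_def adj_path_def by (auto simp: last_conv_nth Suc_leI)
  have "{w\<in>A. adj v w} \<subseteq> {xs ! (m - 2)}"
  proof
    fix w assume w: "w \<in> {w\<in>A. adj v w}"
    have "w \<in> set xs"
      using longest[OF adj_path_snoc[OF xs, of w]] w unfolding v_def by fastforce
    then obtain i where i: "i < m" "xs ! i = w" unfolding m_def by (auto simp: in_set_conv_nth)
    have "i \<noteq> m - 1" using i w m by auto
    moreover have "\<not> i < m - 2"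
    proof
      assume "i < m - 2"
      then have "3 \<le> length (drop i xs)" unfolding m_def by simp
      moreover have "adj (last (drop i xs)) (hd (drop i xs))"
        using i w unfolding v_def m_def by (simp add: hd_drop_conv_nth)
      ultimately show False
        using adj_path_drop[OF xs] i(1) assms(3)
        unfolding acyclic_poly_iff_no_closed_path m_def by blast
    qed
    ultimately have "i = m - 2" using i by linarith
    then show "w \<in> {xs ! (m - 2)}" using i by simp
  qed
  then have "card {w\<in>A. adj v w} \<le> card {xs ! (m - 2)}" by (intro card_mono) auto
  then show ?thesis using that m by simp
qed

lemma card_adjrel_remove:
  assumes "finite A" "v \<in> A"
  shows "card (adjrel A) = card (adjrel (A - {v})) + 2 * card {w\<in>A. adj v w}"
proof -
  define N where "N = {w\<in>A. adj v w}"
  have split: "adjrel A = adjrel (A - {v}) \<union> ({v} \<times> N) \<union> (N \<times> {v})"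
    unfolding adjrel_def N_def using assms(2) adj_sym by auto
  have "finite N" "v \<notin> N" using assms(1) unfolding N_def by auto
  moreover have "adjrel (A - {v}) \<inter> ({v} \<times> N) = {}"
    "(adjrel (A - {v}) \<union> ({v} \<times> N)) \<inter> (N \<times> {v}) = {}"
    using \<open>v \<notin> N\<close> by (auto simp: adjrel_def)
  ultimately show ?thesis
    unfolding split N_def[symmetric] using assms(1) finite_adjrel[of "A - {v}"]
    by (simp add: card_Un_disjoint card_cartesian_product)
qed

lemma card_adjrel_le_if_acyclic:
  "finite A \<Longrightarrow> acyclic_poly A \<Longrightarrow> card (adjrel A) \<le> 2 * (card A - 1)"
proof (induction "card A" arbitrary: A)
  case 0
  then show ?case by (simp add: adjrel_def)
next
  case (Suc k)
  then have "A \<noteq> {}" by auto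
  then obtain v where v: "v \<in> A" "card {w\<in>A. adj v w} \<le> 1"
    using acyclic_poly_has_leaf Suc.prems by blast
  have k: "card (A - {v}) = k" using Suc v by simp
  have deg_le_k: "card {w\<in>A. adj v w} \<le> k"
    unfolding k[symmetric] using Suc.prems(1) by (intro card_mono) auto
  then have "card (adjrel (A - {v})) \<le> 2 * (k - 1)"
    using k Suc.hyps(1)[of "A - {v}"] Suc.prems acyclic_poly_subset[of A "A - {v}"] by auto
  then show ?case
    using card_adjrel_remove[OF Suc.prems(1) v(1)] v(2) deg_le_k Suc.hyps(2) by (cases k) auto
qed

lemma card_sym_rel_with_cycle_ge:
  assumes "finite A" "R \<subseteq> A \<times> A" "sym R" "r \<in> A" "\<forall>x\<in>A. (r, x) \<in> R\<^sup>*"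
    and "(u, w) \<in> R" "u \<noteq> w" "(w, u) \<in> (R - {(u, w), (w, u)})\<^sup>*"
  shows "2 * card A \<le> card R"
proof -
  define R' where "R' = R - {(u, w), (w, u)}"
  have "sym R'" using assms(3) unfolding R'_def sym_def by blast
  then have "(u, w) \<in> R'\<^sup>*" using assms(8) unfolding R'_def by (meson sym_rtrancl symD)
  then have "R \<subseteq> R'\<^sup>*" using assms(8) unfolding R'_def by auto
  then have "\<forall>x\<in>A. (r, x) \<in> R'\<^sup>*" using assms(5) rtrancl_subset_rtrancl by blast
  then have "2 * (card A - 1) \<le> card R'"
    using card_connected_sym_rel_ge[OF assms(1) _ \<open>sym R'\<close> assms(4)] assms(2)
    unfolding R'_def by blast
  moreover have "finite R" using assms(1,2) finite_subset by blast
  then have "card R' = card R - 2"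
    unfolding R'_def using assms(3,6,7) by (subst card_Diff_subset) (auto dest: symD)
  moreover have "card A \<ge> 1" using assms(1,4) by (auto simp: Suc_le_eq card_gt_0_iff)
  moreover have "card R \<ge> 2"
    using card_mono[OF \<open>finite R\<close>, of "{(u, w), (w, u)}"] assms(3,6,7) by (auto dest: symD)
  ultimately show ?thesis by linarith
qed

lemma polyomino_connected: "polyomino A \<Longrightarrow> r \<in> A \<Longrightarrow> \<forall>x\<in>A. (r, x) \<in> (adjrel A)\<^sup>*"
  unfolding polyomino_def by blast

lemma polyomino_card_adjrel_ge:
  assumes "polyomino A"
  shows "2 * (card A - 1) \<le> card (adjrel A)"
proof -
  obtain r where "r \<in> A" using assms unfolding polyomino_def by blast
  moreover have "adjrel A \<subseteq> A \<times> A" by (auto simp: adjrel_def)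
  ultimately show ?thesis
    using assms card_connected_sym_rel_ge[OF _ _ sym_adjrel] polyomino_connected
    unfolding polyomino_def by blast
qed

lemma closed_adj_path_edge:
  assumes "adj_path A xs" "3 \<le> length xs" "i < length xs - 1"
  shows "(xs ! i, xs ! Suc i) \<in> adjrel A - {(last xs, hd xs), (hd xs, last xs)}"
proof -
  define L where "L = length xs"
  have xs: "distinct xs" "set xs \<subseteq> A" "adj (xs ! i) (xs ! Suc i)"
    using assms(1,3) unfolding adj_path_def by auto
  have "xs \<noteq> []" using assms(2) by auto
  then have ends: "last xs = xs ! (L - 1)" "hd xs = xs ! 0"
    unfolding L_def by (simp_all add: last_conv_nth hd_conv_nth)
  have "i < L" "Suc i < L" using assms(3) unfolding L_def by auto
  have "xs ! i \<noteq> last xs"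
    using nth_eq_iff_index_eq[OF xs(1), of i "L - 1"] assms(3) \<open>i < L\<close>
    unfolding ends(1) L_def by simp
  moreover have "xs ! Suc i \<noteq> last xs" if "xs ! i = hd xs"
  proof -
    have "i = 0"
      using that nth_eq_iff_index_eq[OF xs(1), of i 0] \<open>i < L\<close> unfolding ends(2) L_def by fastforce
    then show ?thesis
      using nth_eq_iff_index_eq[OF xs(1), of 1 "L - 1"] assms(2) unfolding ends(1) L_def by simp
  qed
  moreover have "xs ! i \<in> A" "xs ! Suc i \<in> A"
    using xs(2) \<open>i < L\<close> \<open>Suc i < L\<close> unfolding L_def by (meson nth_mem subsetD)+
  ultimately show ?thesis using xs(3) unfolding adjrel_def by blast
qed

text \<open>Dropping the edge that closes a cycle keeps the dual graph connected.\<close>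
lemma polyomino_card_adjrel_ge_if_not_acyclic:
  assumes "polyomino A" "\<not> acyclic_poly A"
  shows "2 * card A \<le> card (adjrel A)"
proof -
  obtain xs where xs: "3 \<le> length xs" "adj_path A xs" "adj (last xs) (hd xs)"
    using assms(2) unfolding acyclic_poly_iff_no_closed_path by blast
  define L where "L = length xs"
  define u where "u = last xs"
  define w where "w = hd xs"
  have "xs \<noteq> []" "distinct xs" "set xs \<subseteq> A" using xs(2) unfolding adj_path_def by auto
  then have "u \<in> A" "w \<in> A" unfolding u_def w_def by (meson hd_in_set last_in_set subsetD)+
  have ends: "u = xs ! (L - 1)" "w = xs ! 0"
    using \<open>xs \<noteq> []\<close> unfolding u_def w_def L_def by (simp_all add: last_conv_nth hd_conv_nth)
  have "L - 1 < length xs" "0 < length xs" "L - 1 \<noteq> 0" using xs(1) unfolding L_def by auto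
  then have "u \<noteq> w"
    using nth_eq_iff_index_eq[OF \<open>distinct xs\<close>, of "L - 1" 0] unfolding ends by simp
  have "{(xs ! i, xs ! Suc i) | i. i < L - 1} \<subseteq> adjrel A - {(u, w), (w, u)}"
  proof
    fix e assume "e \<in> {(xs ! i, xs ! Suc i) | i. i < L - 1}"
    then obtain i where "e = (xs ! i, xs ! Suc i)" "i < L - 1" by blast
    then show "e \<in> adjrel A - {(u, w), (w, u)}"
      using closed_adj_path_edge[OF xs(2,1), of i] unfolding u_def w_def L_def by simp
  qed
  then have "{(xs ! i, xs ! Suc i) | i. i < L - 1}\<^sup>* \<subseteq> (adjrel A - {(u, w), (w, u)})\<^sup>*"
    by (rule rtrancl_mono)
  moreover have "(w, u) \<in> {(xs ! i, xs ! Suc i) | i. i < L - 1}\<^sup>*"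
    using adj_path_rtrancl[OF xs(2), of "L - 1"] xs(1) ends(1) unfolding w_def L_def by simp
  ultimately have "(w, u) \<in> (adjrel A - {(u, w), (w, u)})\<^sup>*" by blast
  moreover have "(u, w) \<in> adjrel A"
    using xs(3) \<open>u \<in> A\<close> \<open>w \<in> A\<close> unfolding u_def w_def adjrel_def by simp
  moreover have "finite A" using assms(1) unfolding polyomino_def by blast
  moreover have "adjrel A \<subseteq> A \<times> A" by (auto simp: adjrel_def)
  ultimately show ?thesis
    using card_sym_rel_with_cycle_ge[OF _ _ sym_adjrel _ polyomino_connected[OF assms(1)]]
      \<open>u \<noteq> w\<close> \<open>w \<in> A\<close> by blast
qed

lemma polyomino_acyclic_iff_card_adjrel:
  assumes "polyomino A"
  shows "acyclic_poly A \<longleftrightarrow> card (adjrel A) = 2 * (card A - 1)"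
proof -
  have "finite A" "card A \<ge> 1"
    using assms unfolding polyomino_def by (auto simp: Suc_leI card_gt_0_iff)
  show ?thesis
  proof
    assume "acyclic_poly A"
    then show "card (adjrel A) = 2 * (card A - 1)"
      using card_adjrel_le_if_acyclic[OF \<open>finite A\<close>] polyomino_card_adjrel_ge[OF assms]
      by (simp add: le_antisym)
  next
    assume "card (adjrel A) = 2 * (card A - 1)"
    then show "acyclic_poly A"
      using polyomino_card_adjrel_ge_if_not_acyclic[OF assms] \<open>card A \<ge> 1\<close> by linarith
  qed
qed

lemma card_le_card_fst_times_card_snd:
  "finite S \<Longrightarrow> card S \<le> card (fst ` S) * card (snd ` S)"
  using card_mono[of "fst ` S \<times> snd ` S" S] by (force simp: card_cartesian_product)

lemma Max_in_not_succ:
  fixes X :: "int set"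
  assumes "finite X" "X \<noteq> {}"
  shows "Max X \<in> X" "Max X + 1 \<notin> X"
  using Max_in[OF assms] Max_ge[OF assms(1), of "Max X + 1"] by auto

lemma Min_in_not_pred:
  fixes X :: "int set"
  assumes "finite X" "X \<noteq> {}"
  shows "Min X \<in> X" "Min X - 1 \<notin> X"
  using Min_in[OF assms] Min_le[OF assms(1), of "Min X - 1"] by auto

text \<open>Each row of S contributes its two extreme horizontal boundary edges, each
  column its two extreme vertical ones.\<close>
lemma card_boundary_ge_projections:
  assumes "finite S"
  shows "2 * (card (fst ` S) + card (snd ` S)) \<le> card (boundary S)"
proof -
  define row where "row y = {x. (x, y) \<in> S}" for y
  define col where "col x = {y. (x, y) \<in> S}" for x
  have row: "finite (row y)" "row y \<noteq> {}" if "y \<in> snd ` S" for y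
    using that assms finite_subset[of "row y" "fst ` S"] unfolding row_def by force+
  have col: "finite (col x)" "col x \<noteq> {}" if "x \<in> fst ` S" for x
    using that assms finite_subset[of "col x" "snd ` S"] unfolding col_def by force+
  define right where "right y = ((Max (row y), y), (Max (row y) + 1, y))" for y
  define left where "left y = ((Min (row y), y), (Min (row y) - 1, y))" for y
  define up where "up x = ((x, Max (col x)), (x, Max (col x) + 1))" for x
  define down where "down x = ((x, Min (col x)), (x, Min (col x) - 1))" for x
  let ?E = "right ` snd ` S \<union> left ` snd ` S \<union> up ` fst ` S \<union> down ` fst ` S"
  have "right y \<in> boundary S" "left y \<in> boundary S" if "y \<in> snd ` S" for y
    using Max_in_not_succ[OF row[OF that]] Min_in_not_pred[OF row[OF that]]
    unfolding right_def left_def boundary_def row_def adj_def by auto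
  moreover have "up x \<in> boundary S" "down x \<in> boundary S" if "x \<in> fst ` S" for x
    using Max_in_not_succ[OF col[OF that]] Min_in_not_pred[OF col[OF that]]
    unfolding up_def down_def boundary_def col_def adj_def by auto
  ultimately have E_subset: "?E \<subseteq> boundary S" by blast
  have "inj right" "inj left" "inj up" "inj down"
    unfolding right_def left_def up_def down_def inj_def by auto
  then have "card (right ` snd ` S) = card (snd ` S)" "card (left ` snd ` S) = card (snd ` S)"
    "card (up ` fst ` S) = card (fst ` S)" "card (down ` fst ` S) = card (fst ` S)"
    by (simp_all add: card_image inj_on_subset)
  moreover have "right ` snd ` S \<inter> left ` snd ` S = {}"
    "(right ` snd ` S \<union> left ` snd ` S) \<inter> up ` fst ` S = {}"
    "(right ` snd ` S \<union> left ` snd ` S \<union> up ` fst ` S) \<inter> down ` fst ` S = {}"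
    unfolding right_def left_def up_def down_def by auto
  ultimately have "card ?E = 2 * (card (fst ` S) + card (snd ` S))"
    using assms by (simp add: card_Un_disjoint)
  then show ?thesis using card_mono[OF finite_boundary[OF assms] E_subset] by simp
qed

lemma card_projections_pos:
  "finite S \<Longrightarrow> S \<noteq> {} \<Longrightarrow> 0 < card (fst ` S) \<and> 0 < card (snd ` S)"
  by (simp add: card_gt_0_iff)

lemma card_boundary_ge_4: "finite S \<Longrightarrow> S \<noteq> {} \<Longrightarrow> 4 \<le> card (boundary S)"
  using card_boundary_ge_projections[of S] card_projections_pos[of S] by fastforce

lemma card_boundary_eq_4_iff:
  assumes "finite S" "S \<noteq> {}"
  shows "card (boundary S) = 4 \<longleftrightarrow> card S = 1"
proof
  assume "card (boundary S) = 4"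
  then have "card (fst ` S) = 1" "card (snd ` S) = 1"
    using card_boundary_ge_projections[OF assms(1)] card_projections_pos[OF assms] by auto
  moreover have "0 < card S" using assms by (simp add: card_gt_0_iff)
  ultimately show "card S = 1"
    using card_le_card_fst_times_card_snd[OF assms(1)] by simp
next
  assume "card S = 1"
  then show "card (boundary S) = 4" by (auto simp: card_Suc_eq card_boundary_singleton)
qed

text \<open>The discrete isoperimetric inequality: with a and b the numbers of columns and
  rows, m \<le> a b \<le> (a + b)^2 / 4, so 2 \<lceil>2 \<surd>m\<rceil> \<le> 2 (a + b).\<close>
lemma card_boundary_ge_isoperimetric:
  assumes "finite S" "m \<le> card S"
  shows "2 * \<lceil>2 * sqrt (real m)\<rceil> \<le> int (card (boundary S))"
proof -
  define a where "a = card (fst ` S)"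
  define b where "b = card (snd ` S)"
  have "real m \<le> real a * real b"
    using card_le_card_fst_times_card_snd[OF assms(1)] assms(2) unfolding a_def b_def
    by (metis le_trans of_nat_le_iff of_nat_mult)
  moreover have "4 * (real a * real b) \<le> (real a + real b)\<^sup>2"
    using sum_squares_ge_zero[of "real a - real b" 0] by (simp add: power2_eq_square algebra_simps)
  ultimately have "sqrt (4 * real m) \<le> sqrt ((real a + real b)\<^sup>2)"
    by (intro real_sqrt_le_mono) linarith
  then have "\<lceil>2 * sqrt (real m)\<rceil> \<le> int a + int b"
    by (simp add: real_sqrt_mult ceiling_le_iff)
  moreover have "2 * (a + b) \<le> card (boundary S)"
    using card_boundary_ge_projections[OF assms(1)] unfolding a_def b_def .
  then have "2 * (int a + int b) \<le> int (card (boundary S))"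
    by (metis of_nat_add of_nat_le_iff of_nat_mult of_nat_numeral)
  ultimately show ?thesis by simp
qed

lemma comp_self: "c \<notin> A \<Longrightarrow> c \<in> comp A c"
  unfolding comp_def by simp

lemma comp_disjoint: "c \<notin> A \<Longrightarrow> comp A c \<inter> A = {}"
proof -
  have "x \<notin> A" if "(c, x) \<in> (adjrel (- A))\<^sup>*" "c \<notin> A" for x
    using that by (induction rule: rtrancl_induct) (auto simp: adjrel_def)
  then show "c \<notin> A \<Longrightarrow> comp A c \<inter> A = {}" unfolding comp_def by blast
qed

lemma comp_eq:
  assumes "x \<in> comp A c"
  shows "comp A x = comp A c"
proof -
  have "(c, x) \<in> (adjrel (- A))\<^sup>*" using assms unfolding comp_def by simp
  moreover from this have "(x, c) \<in> (adjrel (- A))\<^sup>*"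
    by (meson sym_adjrel sym_rtrancl symD)
  ultimately show ?thesis unfolding comp_def by (blast intro: rtrancl_trans)
qed

lemma comp_adj_closed:
  assumes "x \<in> comp A c" "x \<notin> A" "d \<notin> A" "adj x d"
  shows "d \<in> comp A c"
proof -
  have "(x, d) \<in> adjrel (- A)" using assms(2-4) unfolding adjrel_def by simp
  then show ?thesis using assms(1) unfolding comp_def by (simp add: rtrancl_into_rtrancl)
qed

lemma comp_in_holes: "d \<notin> A \<Longrightarrow> finite (comp A d) \<Longrightarrow> comp A d \<in> holes A"
  unfolding holes_def by blast

lemma holesD:
  assumes "H \<in> holes A"
  shows "finite H" "H \<noteq> {}" "H \<inter> A = {}" "\<And>d. d \<in> H \<Longrightarrow> comp A d = H"
proof -
  obtain c where c: "c \<notin> A" "finite (comp A c)" "H = comp A c"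
    using assms unfolding holes_def by blast
  then show "finite H" "H \<noteq> {}" "H \<inter> A = {}"
    using comp_self comp_disjoint by blast+
  show "comp A d = H" if "d \<in> H" for d using comp_eq that c(3) by simp
qed

lemma holes_disjoint: "H \<in> holes A \<Longrightarrow> H' \<in> holes A \<Longrightarrow> H \<noteq> H' \<Longrightarrow> H \<inter> H' = {}"
  using holesD(4) by blast

text \<open>Every non-tile neighbour of a hole lies in the same component, so it is a tile.\<close>
lemma swap_boundary_hole:
  assumes "H \<in> holes A"
  shows "prod.swap ` boundary H = {(c, d). c \<in> A \<and> d \<in> H \<and> adj c d}"
proof -
  have tile: "c \<in> A" if "d \<in> H" "c \<notin> H" "adj d c" for c d
  proof (rule ccontr)
    assume "c \<notin> A"
    moreover have "d \<notin> A" using holesD(3)[OF assms] \<open>d \<in> H\<close> by blast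
    ultimately have "c \<in> comp A d" using comp_adj_closed[OF comp_self] \<open>adj d c\<close> by blast
    then show False using holesD(4)[OF assms \<open>d \<in> H\<close>] \<open>c \<notin> H\<close> by blast
  qed
  show ?thesis
  proof (intro equalityI subsetI)
    fix p assume "p \<in> prod.swap ` boundary H"
    then obtain c d where "p = (c, d)" "d \<in> H" "c \<notin> H" "adj d c"
      unfolding boundary_def by auto
    then show "p \<in> {(c, d). c \<in> A \<and> d \<in> H \<and> adj c d}"
      using tile adj_sym by blast
  next
    fix p assume "p \<in> {(c, d). c \<in> A \<and> d \<in> H \<and> adj c d}"
    then obtain c d where cd: "p = (c, d)" "c \<in> A" "d \<in> H" "adj c d" by blast
    then have "(d, c) \<in> boundary H"
      using holesD(3)[OF assms] adj_sym unfolding boundary_def by blast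
    then show "p \<in> prod.swap ` boundary H" using cd(1) by (metis image_eqI swap_simp)
  qed
qed

lemma finite_holes:
  assumes "finite A"
  shows "finite (holes A)"
proof -
  have "H \<in> comp A ` (\<Union>c\<in>A. neighbours c)" if H: "H \<in> holes A" for H
  proof -
    have "boundary H \<noteq> {}" using card_boundary_ge_4[OF holesD(1,2)[OF H]] by auto
    then have "prod.swap ` boundary H \<noteq> {}" by blast
    then obtain c d where "c \<in> A" "d \<in> H" "adj c d"
      unfolding swap_boundary_hole[OF H] by blast
    then have "d \<in> (\<Union>c\<in>A. neighbours c)" by (auto simp: adj_iff_neighbours)
    then show ?thesis using holesD(4)[OF H \<open>d \<in> H\<close>] by (metis image_eqI)
  qed
  then have "holes A \<subseteq> comp A ` (\<Union>c\<in>A. neighbours c)" by blast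
  moreover have "finite (comp A ` (\<Union>c\<in>A. neighbours c))" using assms by simp
  ultimately show ?thesis by (rule finite_subset)
qed

lemma card_boundary_eq_outer_perimeter_add_holes:
  assumes "finite A"
  shows "card (boundary A) = outer_perimeter A + (\<Sum>H\<in>holes A. card (boundary H))"
proof -
  define outer where "outer = {(c, d). c \<in> A \<and> d \<notin> A \<and> adj c d \<and> infinite (comp A d)}"
  define facing where "facing H = {(c, d). c \<in> A \<and> d \<in> H \<and> adj c d}" for H
  have facing_swap: "facing H = prod.swap ` boundary H" if "H \<in> holes A" for H
    unfolding facing_def swap_boundary_hole[OF that] ..
  have "boundary A \<subseteq> outer \<union> (\<Union>H\<in>holes A. facing H)"
  proof (intro subsetI)
    fix p assume "p \<in> boundary A"
    then obtain c d where cd: "p = (c, d)" "c \<in> A" "d \<notin> A" "adj c d"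
      unfolding boundary_def by blast
    show "p \<in> outer \<union> (\<Union>H\<in>holes A. facing H)"
    proof (cases "finite (comp A d)")
      case True
      then have "comp A d \<in> holes A" "p \<in> facing (comp A d)"
        using cd comp_in_holes comp_self unfolding facing_def by auto
      then show ?thesis by blast
    qed (use cd in \<open>simp add: outer_def\<close>)
  qed
  moreover have "outer \<subseteq> boundary A"
    unfolding outer_def boundary_def by auto
  moreover have "facing H \<subseteq> boundary A" if "H \<in> holes A" for H
    using holesD(3)[OF that] unfolding facing_def boundary_def by auto
  ultimately have split: "boundary A = outer \<union> (\<Union>H\<in>holes A. facing H)" by blast
  have "outer \<inter> facing H = {}" if "H \<in> holes A" for H
    using holesD(1,4)[OF that] unfolding outer_def facing_def by auto
  then have disjoint: "outer \<inter> (\<Union>H\<in>holes A. facing H) = {}" by blast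
  have "card (\<Union>H\<in>holes A. facing H) = (\<Sum>H\<in>holes A. card (facing H))"
  proof (rule card_UN_disjoint[OF finite_holes[OF assms]])
    show "\<forall>H\<in>holes A. finite (facing H)"
      using facing_swap finite_boundary holesD(1) by simp
    show "\<forall>H\<in>holes A. \<forall>H'\<in>holes A. H \<noteq> H' \<longrightarrow> facing H \<inter> facing H' = {}"
      using holes_disjoint unfolding facing_def by blast
  qed
  also have "\<dots> = (\<Sum>H\<in>holes A. card (boundary H))"
    using facing_swap by (simp add: card_image)
  finally show ?thesis
    using finite_boundary[OF assms] disjoint unfolding split outer_perimeter_def outer_def[symmetric]
    by (simp add: card_Un_disjoint)
qed

lemma outer_perimeter_eq_card_boundary_filled:
  "outer_perimeter A = card (boundary (A \<union> \<Union>(holes A)))"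
proof -
  let ?F = "A \<union> \<Union>(holes A)"
  have "(c, d) \<in> boundary ?F \<longleftrightarrow> c \<in> A \<and> d \<notin> A \<and> adj c d \<and> infinite (comp A d)" for c d
  proof
    assume "c \<in> A \<and> d \<notin> A \<and> adj c d \<and> infinite (comp A d)"
    moreover have "d \<notin> \<Union>(holes A)" if "infinite (comp A d)"
      using holesD(1,4) that by blast
    ultimately show "(c, d) \<in> boundary ?F" unfolding boundary_def by blast
  next
    assume cd: "(c, d) \<in> boundary ?F"
    then have d: "d \<notin> A" "d \<notin> \<Union>(holes A)" "adj c d" unfolding boundary_def by auto
    then have "infinite (comp A d)" using comp_in_holes comp_self by blast
    moreover have "c \<in> A"
    proof (rule ccontr)
      assume "c \<notin> A"
      then obtain H where H: "H \<in> holes A" "c \<in> H" using cd unfolding boundary_def by blast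
      then have "d \<in> comp A c" using comp_adj_closed[OF comp_self] \<open>c \<notin> A\<close> d by blast
      then show False using holesD(4)[OF H] d(2) H by blast
    qed
    ultimately show "c \<in> A \<and> d \<notin> A \<and> adj c d \<and> infinite (comp A d)" using d by blast
  qed
  then have "{(c, d). c \<in> A \<and> d \<notin> A \<and> adj c d \<and> infinite (comp A d)} = boundary ?F"
    by auto
  then show ?thesis unfolding outer_perimeter_def by simp
qed

lemma outer_perimeter_ge:
  assumes "finite A"
  shows "2 * \<lceil>2 * sqrt (real (card A + card (holes A)))\<rceil> \<le> int (outer_perimeter A)"
proof -
  have fin: "finite (holes A)" "\<forall>H\<in>holes A. finite H"
    using finite_holes[OF assms] holesD(1) by blast+
  have "card (holes A) = (\<Sum>H\<in>holes A. 1)" by simp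
  also have "\<dots> \<le> (\<Sum>H\<in>holes A. card H)"
    using holesD(1,2) by (intro sum_mono) (simp add: Suc_le_eq card_gt_0_iff)
  also have "\<dots> = card (\<Union>(holes A))"
    using card_UN_disjoint[of "holes A" id] fin holes_disjoint by simp
  finally have "card A + card (holes A) \<le> card (A \<union> \<Union>(holes A))"
    using assms fin holesD(3) by (subst card_Un_disjoint) auto
  with assms fin show ?thesis
    unfolding outer_perimeter_eq_card_boundary_filled
    by (intro card_boundary_ge_isoperimetric) simp_all
qed

lemma sum_card_boundary_holes:
  assumes "finite A"
  shows "4 * card (holes A) \<le> (\<Sum>H\<in>holes A. card (boundary H))"
    and "(\<Sum>H\<in>holes A. card (boundary H)) = 4 * card (holes A) \<longleftrightarrow> (\<forall>H\<in>holes A. card H = 1)"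
proof -
  have ge: "4 \<le> card (boundary H)" if "H \<in> holes A" for H
    using card_boundary_ge_4 holesD(1,2)[OF that] by blast
  then have "(\<Sum>H\<in>holes A. 4) \<le> (\<Sum>H\<in>holes A. card (boundary H))"
    by (rule sum_mono)
  then show "4 * card (holes A) \<le> (\<Sum>H\<in>holes A. card (boundary H))"
    by (simp add: mult.commute)
  have "(\<Sum>H\<in>holes A. 4) = (\<Sum>H\<in>holes A. card (boundary H)) \<longleftrightarrow>
      (\<forall>H\<in>holes A. card (boundary H) = 4)"
  proof
    assume eq: "(\<Sum>H\<in>holes A. 4) = (\<Sum>H\<in>holes A. card (boundary H))"
    show "\<forall>H\<in>holes A. card (boundary H) = 4"
      using sum_mono_inv[OF eq ge _ finite_holes[OF assms]] by simp
  next
    assume "\<forall>H\<in>holes A. card (boundary H) = 4"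
    then show "(\<Sum>H\<in>holes A. 4) = (\<Sum>H\<in>holes A. card (boundary H))"
      by (intro sum.cong) auto
  qed
  moreover have "(\<forall>H\<in>holes A. card (boundary H) = 4) \<longleftrightarrow> (\<forall>H\<in>holes A. card H = 1)"
    using card_boundary_eq_4_iff[OF holesD(1,2)] by simp
  moreover have "(\<Sum>H\<in>holes A. 4) = 4 * card (holes A)" by simp
  ultimately show "(\<Sum>H\<in>holes A. card (boundary H)) = 4 * card (holes A) \<longleftrightarrow> (\<forall>H\<in>holes A. card H = 1)"
    by argo
qed

lemma sum_eq_sum_lower_bounds_iff:
  fixes a b c a' b' c' :: int
  assumes "a' \<le> a" "b' \<le> b" "c' \<le> c"
  shows "a' + b' + c' = a + b + c \<longleftrightarrow> a = a' \<and> b = b' \<and> c = c'"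
proof
  show "a = a' \<and> b = b' \<and> c = c'" if "a' + b' + c' = a + b + c"
    using assms that by (intro conjI) linarith+
qed simp

lemma M_eq_iff:
  "real h = M n h \<longleftrightarrow> 4 * int h = 2 * int n + 2 - 2 * \<lceil>2 * sqrt (real (n + h))\<rceil>"
proof -
  have "real h = M n h \<longleftrightarrow>
      real_of_int (4 * int h) = real_of_int (2 * int n + 2 - 2 * \<lceil>2 * sqrt (real (n + h))\<rceil>)"
    unfolding M_def by auto
  then show ?thesis by (simp only: of_int_eq_iff)
qed

theorem lemma3:
  fixes A :: "cell set"
  assumes "polyomino A"
  shows "efficiently_structured A \<longleftrightarrow>
           real (card (holes A)) = M (card A) (card (holes A))"
proof -
  have fin: "finite A" and "card A \<ge> 1"
    using assms unfolding polyomino_def by (auto simp: Suc_leI card_gt_0_iff)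
  define n h c where "n = int (card A)" and "h = int (card (holes A))"
    and "c = \<lceil>2 * sqrt (real (card A + card (holes A)))\<rceil>"
  define E S P where "E = int (card (adjrel A))" and "S = int (\<Sum>H\<in>holes A. card (boundary H))"
    and "P = int (outer_perimeter A)"
  have count: "E + S + P = 4 * n"
    using card_adjrel_add_card_boundary[OF fin] card_boundary_eq_outer_perimeter_add_holes[OF fin]
    unfolding E_def P_def S_def n_def by linarith
  have bounds: "2 * n - 2 \<le> E" "4 * h \<le> S" "2 * c \<le> P"
    using polyomino_card_adjrel_ge[OF assms] sum_card_boundary_holes(1)[OF fin]
      outer_perimeter_ge[OF fin] \<open>card A \<ge> 1\<close>
    unfolding E_def P_def S_def n_def h_def c_def by linarith+
  have "int (2 * (card A - 1)) = 2 * n - 2"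
    using \<open>card A \<ge> 1\<close> unfolding n_def by (simp add: of_nat_diff)
  then have acyclic: "acyclic_poly A \<longleftrightarrow> E = 2 * n - 2"
    unfolding polyomino_acyclic_iff_card_adjrel[OF assms] E_def by (metis of_nat_eq_iff)
  have unit_holes: "(\<forall>H\<in>holes A. card H = 1) \<longleftrightarrow> S = 4 * h"
    using sum_card_boundary_holes(2)[OF fin] unfolding S_def h_def by linarith
  have min_perimeter: "min_outer_perimeter A \<longleftrightarrow> P = 2 * c"
    unfolding min_outer_perimeter_def P_def c_def ..
  have "efficiently_structured A \<longleftrightarrow> (2 * n - 2) + 4 * h + 2 * c = 4 * n"
    unfolding efficiently_structured_def acyclic unit_holes min_perimeter
      sum_eq_sum_lower_bounds_iff[OF bounds, symmetric] count ..
  then show ?thesis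
    unfolding M_eq_iff n_def[symmetric] h_def[symmetric] c_def[symmetric] by presburger
qed

end
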